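(* Let $X$ be a topological space. Then the uniform space $(C(X),\mathcal{U}_\Gamma)$ is complete.
   Context: $C(X)$ is the set of continuous real-valued functions on $X$. $LSC(X,(0,1))$ is the set of lower semicontinuous functions $X\to(0,1)$. For $\epsilon\in LSC(X,(0,1))$ let $B(\epsilon)=\{(f,g)\in C(X)\times C(X): |f(x)-g(x)|<\epsilon(x)\ \forall x\in X\}$. The uniformity $\mathcal{U}_\Gamma$ on $C(X)$ is the uniformity having $\{B(\epsilon):\epsilon\in LSC(X,(0,1))\}$ as a base; it induces the graph topology on $C(X)$ (the topology with base the sets $\{f\in C(X): \text{graph}(f)\subset G\}$, $G$ open in $X\times\mathbb{R}$). *)

theory Defs
  imports "HOL-Analysis.Analysis"
begin

definition Cfun :: "('a::topological_space \<Rightarrow> real) set" where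
  "Cfun = {f. continuous_on UNIV f}"

definition lsc :: "('a::topological_space \<Rightarrow> real) \<Rightarrow> bool" where
  "lsc f \<longleftrightarrow> (\<forall>t. open {x. t < f x})"

definition LSC01 :: "('a::topological_space \<Rightarrow> real) set" where
  "LSC01 = {e. lsc e \<and> (\<forall>x. 0 < e x \<and> e x < 1)}"

definition Bent :: "('a::topological_space \<Rightarrow> real) \<Rightarrow> (('a \<Rightarrow> real) \<times> ('a \<Rightarrow> real)) set" where
  "Bent e = {(f, g). f \<in> Cfun \<and> g \<in> Cfun \<and> (\<forall>x. \<bar>f x - g x\<bar> < e x)}"

definition unif_Gamma :: "(('a::topological_space \<Rightarrow> real) \<times> ('a \<Rightarrow> real)) filter" where
  "unif_Gamma = (INF e\<in>LSC01. principal (Bent e))"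

definition nhds_Gamma :: "('a::topological_space \<Rightarrow> real) \<Rightarrow> ('a \<Rightarrow> real) filter" where
  "nhds_Gamma f = (INF e\<in>LSC01. principal {g. (f, g) \<in> Bent e})"

definition cauchy_Gamma :: "('a::topological_space \<Rightarrow> real) filter \<Rightarrow> bool" where
  "cauchy_Gamma F \<longleftrightarrow> F \<noteq> bot \<and> F \<le> principal Cfun \<and> F \<times>\<^sub>F F \<le> unif_Gamma"

end

theory Submission
  imports Defs
begin

(*
  A Cauchy filter F on C(X) is in particular uniformly Cauchy, because every
  constant function c with 0 < c < 1 is a lower semicontinuous gauge.  Hence
  (1) F converges pointwise to some f : X -> R, since R is complete;
  (2) passing to the limit in |g x - h x| < e x shows that eventually
      |g x - f x| <= e x for all x, for every gauge e in LSC(X,(0,1));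
  (3) for constant gauges this is uniform convergence, so f is continuous;
  (4) applying (2) to the gauge e/2 gives eventually |f x - g x| < e x,
      i.e. F converges to f in U_Gamma.
*)

lemma const_LSC01: "0 < (c::real) \<Longrightarrow> c < 1 \<Longrightarrow> (\<lambda>_. c) \<in> LSC01"
  unfolding LSC01_def lsc_def
proof (intro CollectI conjI allI)
  fix t
  show "open {x::'a. t < c}" by (cases "t < c") auto
qed auto

text \<open>Halving a gauge yields a gauge; this gives the room needed to turn
  a non-strict limit estimate into the strict one demanded by Bent.\<close>
lemma half_LSC01:
  assumes "e \<in> LSC01"
  shows "(\<lambda>x. e x / 2) \<in> LSC01"
proof -
  have "open {x. t < e x / 2}" for t
  proof -
    have "{x. t < e x / 2} = {x. 2 * t < e x}" by auto
    then show ?thesis using assms by (simp add: LSC01_def lsc_def)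
  qed
  moreover have "0 < e x / 2 \<and> e x / 2 < 1" for x
  proof -
    have "0 < e x" "e x < 1" using assms by (auto simp: LSC01_def)
    then show ?thesis by simp
  qed
  ultimately show ?thesis by (simp add: LSC01_def lsc_def)
qed

lemma cauchy_Gamma_small_set:
  assumes "cauchy_Gamma F" "e \<in> LSC01"
  obtains Q where "eventually Q F" "\<And>g h. Q g \<Longrightarrow> Q h \<Longrightarrow> (g, h) \<in> Bent e"
proof -
  have "F \<times>\<^sub>F F \<le> principal (Bent e)"
    using assms unfolding cauchy_Gamma_def unif_Gamma_def
    by (meson INF_lower order_trans)
  then have "eventually (\<lambda>p. p \<in> Bent e) (F \<times>\<^sub>F F)" by (simp add: le_principal)
  then show ?thesis using that unfolding eventually_prod_same by auto
qed

lemma cauchy_Gamma_pointwise_limit: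
  fixes F :: "('a::topological_space \<Rightarrow> real) filter"
  assumes "cauchy_Gamma F"
  obtains f where "\<And>x. ((\<lambda>g. g x) \<longlongrightarrow> f x) F"
proof -
  have "\<exists>l. filtermap (\<lambda>g. g x) F \<le> nhds l" for x
  proof (rule cauchy_filter_complete_converges[OF _ complete_UNIV])
    show "cauchy_filter (filtermap (\<lambda>g. g x) F)"
      unfolding cauchy_filter_metric_filtermap
    proof (intro allI impI)
      fix \<epsilon> :: real assume "\<epsilon> > 0"
      define c where "c = min \<epsilon> (1/2)"
      have "(\<lambda>_. c) \<in> (LSC01 :: ('a \<Rightarrow> real) set)"
        using \<open>\<epsilon> > 0\<close> by (intro const_LSC01) (auto simp: c_def)
      then obtain Q where "eventually Q F" "\<And>g h. Q g \<Longrightarrow> Q h \<Longrightarrow> (g, h) \<in> Bent (\<lambda>_. c)"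
        using cauchy_Gamma_small_set[OF assms] by blast
      then show "\<exists>P. eventually P F \<and> (\<forall>g h. P g \<and> P h \<longrightarrow> dist (g x) (h x) < \<epsilon>)"
        by (intro exI[of _ Q]) (force simp: Bent_def dist_real_def c_def)
    qed
    show "filtermap (\<lambda>g. g x) F \<le> principal UNIV" by simp
    show "filtermap (\<lambda>g. g x) F \<noteq> bot"
      using assms by (simp add: cauchy_Gamma_def filtermap_bot_iff)
  qed
  then show ?thesis using that unfolding filterlim_def by metis
qed

lemma cauchy_Gamma_eventually_close:
  assumes F: "cauchy_Gamma F"
    and lim: "\<And>x. ((\<lambda>g. g x) \<longlongrightarrow> f x) F"
    and e: "e \<in> LSC01"
  shows "eventually (\<lambda>g. g \<in> Cfun \<and> (\<forall>x. \<bar>g x - f x\<bar> \<le> e x)) F"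
proof -
  have nontriv: "F \<noteq> bot" and cont: "eventually (\<lambda>g. g \<in> Cfun) F"
    using F unfolding cauchy_Gamma_def by (auto simp: le_principal)
  obtain Q where Q: "eventually Q F" and close: "\<And>g h. Q g \<Longrightarrow> Q h \<Longrightarrow> (g, h) \<in> Bent e"
    using cauchy_Gamma_small_set[OF F e] by blast
  have limit_bound: "\<bar>g x - f x\<bar> \<le> e x" if "Q g" for g x
  proof (rule tendsto_upperbound[OF _ _ nontriv])
    show "((\<lambda>h. \<bar>g x - h x\<bar>) \<longlongrightarrow> \<bar>g x - f x\<bar>) F"
      by (intro tendsto_intros lim)
    show "eventually (\<lambda>h. \<bar>g x - h x\<bar> \<le> e x) F"
    proof (rule eventually_mono[OF Q])
      fix h assume "Q h"
      from close[OF that this] show "\<bar>g x - h x\<bar> \<le> e x"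
        unfolding Bent_def by (auto intro: less_imp_le)
    qed
  qed
  show ?thesis
    using eventually_conj[OF cont Q] by (rule eventually_mono) (use limit_bound in blast)
qed

text \<open>Step (3): with constant gauges, (2) is uniform convergence, so the
  pointwise limit is continuous.\<close>
lemma cauchy_Gamma_limit_continuous:
  fixes F :: "('a::topological_space \<Rightarrow> real) filter"
  assumes F: "cauchy_Gamma F" and lim: "\<And>x. ((\<lambda>g. g x) \<longlongrightarrow> f x) F"
  shows "f \<in> Cfun"
proof -
  have "uniform_limit UNIV (\<lambda>g. g) f F"
    unfolding uniform_limit_iff
  proof (intro allI impI)
    fix \<epsilon> :: real assume "\<epsilon> > 0"
    define c where "c = min (\<epsilon> / 2) (1/2)"
    have c: "0 < c" "c < \<epsilon>" using \<open>\<epsilon> > 0\<close> by (auto simp: c_def)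
    have "(\<lambda>_. c) \<in> (LSC01 :: ('a \<Rightarrow> real) set)"
      using c by (intro const_LSC01) (auto simp: c_def)
    from cauchy_Gamma_eventually_close[OF F lim this]
    show "\<forall>\<^sub>F g in F. \<forall>x\<in>UNIV. dist (g x) (f x) < \<epsilon>"
    proof (rule eventually_mono)
      fix g assume "g \<in> Cfun \<and> (\<forall>x. \<bar>g x - f x\<bar> \<le> c)"
      then show "\<forall>x\<in>UNIV. dist (g x) (f x) < \<epsilon>"
        using c by (simp add: dist_real_def) (meson le_less_trans)
    qed
  qed
  moreover have "\<forall>\<^sub>F g in F. continuous_on UNIV g"
    using cauchy_Gamma_eventually_close[OF F lim const_LSC01[of "1/2"]]
    by (rule eventually_mono) (auto simp: Cfun_def)
  moreover have "\<not> trivial_limit F"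
    using F by (simp add: cauchy_Gamma_def)
  ultimately show ?thesis
    by (simp add: Cfun_def uniform_limit_theorem)
qed

lemma cauchy_Gamma_converges_to_limit:
  assumes F: "cauchy_Gamma F" and lim: "\<And>x. ((\<lambda>g. g x) \<longlongrightarrow> f x) F"
    and fC: "f \<in> Cfun"
  shows "F \<le> nhds_Gamma f"
  unfolding nhds_Gamma_def le_INF_iff le_principal
proof (intro ballI)
  fix e :: "'a \<Rightarrow> real" assume e: "e \<in> LSC01"
  then have pos: "\<And>x. 0 < e x" by (auto simp: LSC01_def)
  from cauchy_Gamma_eventually_close[OF F lim half_LSC01[OF e]]
  show "eventually (\<lambda>g. g \<in> {g. (f, g) \<in> Bent e}) F"
  proof (rule eventually_mono)
    fix g assume g: "g \<in> Cfun \<and> (\<forall>x. \<bar>g x - f x\<bar> \<le> e x / 2)"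
    have "\<bar>f x - g x\<bar> < e x" for x
    proof -
      have "\<bar>g x - f x\<bar> \<le> e x / 2" using g by blast
      then show ?thesis using pos[of x] by linarith
    qed
    then show "g \<in> {g. (f, g) \<in> Bent e}" using g fC by (simp add: Bent_def)
  qed
qed

theorem proposition1p3:
  fixes F :: "('a::topological_space \<Rightarrow> real) filter"
  assumes "cauchy_Gamma F"
  shows "\<exists>f\<in>Cfun. F \<le> nhds_Gamma f"
proof -
  obtain f where lim: "\<And>x. ((\<lambda>g. g x) \<longlongrightarrow> f x) F"
    using cauchy_Gamma_pointwise_limit[OF assms] by blast
  have "f \<in> Cfun"
    using cauchy_Gamma_limit_continuous[OF assms lim] .
  moreover have "F \<le> nhds_Gamma f"
    using cauchy_Gamma_converges_to_limit[OF assms lim \<open>f \<in> Cfun\<close>] .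
  ultimately show ?thesis by blast
qed

end
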